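(* Let $h>0$, $K>0$ and $g\in C(\mathbb{R}_+,\mathbb{R}_+)$ with $g(0)=0$, $g(K)=K$ and $\liminf_{x\to0+}g(x)/x>1$. Let $p_1,p_2$ satisfy $1<p_1<\liminf_{x\to0+}g(x)/x\le\limsup_{x\to0+}g(x)/x<p_2$, and for $i=1,2$ let $\lambda_i$ be the unique positive real root of $z=-1+p_ie^{-zh}$ (so $0<\lambda_1<\lambda_2$). Then for every nonnegative solution $\psi:\mathbb{R}\to\mathbb{R}_+$ of $x'(t)=-x(t)+g(x(t-h))$ with $\psi(-\infty)=0$ and $\psi(+\infty)=K$ there exist $\tau<0$ and $C_1,C_2>0$ such that $$C_1e^{\lambda_2t}\le\psi(t)\le C_2e^{\lambda_1t}\qquad\text{for all } t\le\tau.$$ *)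

theory Defs
  imports "HOL-Analysis.Analysis"
begin

end

theory Submission
  imports Defs
begin

text \<open>
  Since \<open>g \<ge> 0\<close>, the function \<open>exp t * psi t\<close> is nondecreasing, so over one delay
  interval \<open>psi\<close> decreases at most by the factor \<open>exp (- h)\<close>; with \<open>g 0 = 0\<close> and the method of
  steps this also makes \<open>psi\<close> strictly positive, as it is not identically zero.
  Far enough to the left \<open>psi\<close> is small, so there \<open>p1 * x \<le> g x \<le> p2 * x\<close> at \<open>x = psi (t - h)\<close>:
  \<open>psi\<close> is a supersolution of \<open>x' = - x + p1 * x (t - h)\<close> and a subsolution of
  \<open>x' = - x + p2 * x (t - h)\<close>, whose exponential solutions grow like \<open>exp (lambda1 * t)\<close>
  and \<open>exp (lambda2 * t)\<close>. Comparing \<open>psi\<close> with such an exponential that lies strictly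
  below (resp. above) it on one delay interval, a first-crossing argument keeps the order
  up to \<open>\<tau>\<close>.
\<close>

lemma pos_on_interval_by_first_crossing:
  fixes D :: "real \<Rightarrow> real"
  assumes cont: "continuous_on {a..b} D" and "a \<le> c"
    and init: "\<And>t. t \<in> {a..c} \<Longrightarrow> D t > 0"
    and crossing: "\<And>t. t \<in> {c<..b} \<Longrightarrow> (\<And>u. u \<in> {a..<t} \<Longrightarrow> D u > 0) \<Longrightarrow> D t \<le> 0
                     \<Longrightarrow> \<exists>l>0. (D has_real_derivative l) (at t)"
    and "t \<in> {a..b}"
  shows "D t > 0"
proof (rule ccontr)
  define S where "S = {a..b} \<inter> D -` {..0}"
  assume "\<not> D t > 0"
  then have "S \<noteq> {}" using \<open>t \<in> {a..b}\<close> by (auto simp: S_def)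
  moreover have "bdd_below S" unfolding S_def by (rule bdd_belowI[of _ a]) auto
  moreover have "closed S"
    unfolding S_def by (rule continuous_closed_preimage[OF cont]) auto
  ultimately have "Inf S \<in> S" by (rule closed_contains_Inf)
  define t0 where "t0 = Inf S"
  have t0: "t0 \<in> {a..b}" "D t0 \<le> 0" using \<open>Inf S \<in> S\<close> by (auto simp: S_def t0_def)
  have before: "D u > 0" if "u \<in> {a..<t0}" for u
  proof (rule ccontr)
    assume "\<not> D u > 0"
    with that t0 have "u \<in> S" by (auto simp: S_def)
    then have "t0 \<le> u" unfolding t0_def using \<open>bdd_below S\<close> by (rule cInf_lower)
    with that show False by simp
  qed
  have "c < t0" using init t0 by force
  with t0 have "\<exists>l>0. (D has_real_derivative l) (at t0)"
    by (intro crossing before) auto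
  then obtain l where "l > 0" "(D has_real_derivative l) (at t0)" by blast
  then obtain d where "d > 0" and dec: "\<And>e. 0 < e \<Longrightarrow> e < d \<Longrightarrow> D (t0 - e) < D t0"
    using DERIV_pos_inc_left by blast
  define e where "e = min d (t0 - a) / 2"
  have "0 < e" "e < d" "e < t0 - a" using \<open>d > 0\<close> \<open>c < t0\<close> \<open>a \<le> c\<close> by (auto simp: e_def)
  then have "D (t0 - e) < D t0" "D (t0 - e) > 0" using dec before by auto
  with t0 show False by simp
qed

lemma delay_comparison:
  fixes x y X Y :: "real \<Rightarrow> real"
  assumes "h > 0"
    and x_deriv: "\<And>t. (x has_real_derivative (- x t + X t)) (at t)"
    and y_deriv: "\<And>t. (y has_real_derivative (- y t + Y t)) (at t)"
    and init: "\<And>t. t \<in> {a - h..a} \<Longrightarrow> x t < y t"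
    and step: "\<And>t. t \<in> {a<..b} \<Longrightarrow> x (t - h) < y (t - h) \<Longrightarrow> X t < Y t"
    and "t \<in> {a - h..b}"
  shows "x t < y t"
proof -
  have "continuous_on {a - h..b} (\<lambda>t. y t - x t)"
    using x_deriv y_deriv
    by (intro continuous_intros continuous_at_imp_continuous_on ballI DERIV_isCont) auto
  then have "y t - x t > 0"
  proof (rule pos_on_interval_by_first_crossing[where c = a])
    fix t assume t: "t \<in> {a<..b}" and before: "\<And>u. u \<in> {a - h..<t} \<Longrightarrow> y u - x u > 0"
      and "y t - x t \<le> 0"
    have "X t < Y t" using step[OF t] before[of "t - h"] t \<open>h > 0\<close> by auto
    with \<open>y t - x t \<le> 0\<close> have "- y t + Y t - (- x t + X t) > 0" by simp
    moreover have "((\<lambda>t. y t - x t) has_real_derivative (- y t + Y t - (- x t + X t))) (at t)"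
      using y_deriv x_deriv by (rule DERIV_diff)
    ultimately show "\<exists>l>0. ((\<lambda>t. y t - x t) has_real_derivative l) (at t)" by blast
  qed (use init \<open>h > 0\<close> \<open>t \<in> {a - h..b}\<close> in auto)
  then show ?thesis by simp
qed

lemma exp_solves_linear_delay:
  fixes lambda p h c t0 :: real
  assumes "p * exp (- lambda * h) = 1 + lambda"
  defines "w \<equiv> \<lambda>t. c * exp (lambda * (t - t0))"
  shows "(w has_real_derivative (- w t + p * w (t - h))) (at t)"
proof -
  have "w (t - h) = w t * exp (- lambda * h)"
    unfolding w_def by (simp add: mult.assoc mult_exp_exp algebra_simps)
  then have "p * w (t - h) = (1 + lambda) * w t"
    using assms(1) by (simp add: ac_simps)
  then have "- w t + p * w (t - h) = c * (exp (lambda * (t - t0)) * lambda)"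
    by (simp add: w_def algebra_simps)
  then show ?thesis unfolding w_def by (auto intro!: derivative_eq_intros)
qed

lemma eventually_mult_le_of_less_Liminf_ratio:
  fixes f :: "real \<Rightarrow> real"
  assumes "ereal c < Liminf (at_right 0) (\<lambda>x. ereal (f x / x))"
  shows "\<forall>\<^sub>F x in at_right 0. c * x \<le> f x"
  using less_LiminfD[OF assms] eventually_at_right_less[of 0]
  by eventually_elim (simp add: pos_less_divide_eq)

lemma eventually_le_mult_of_Limsup_ratio_less:
  fixes f :: "real \<Rightarrow> real"
  assumes "Limsup (at_right 0) (\<lambda>x. ereal (f x / x)) < ereal c"
  shows "\<forall>\<^sub>F x in at_right 0. f x \<le> c * x"
  using Limsup_lessD[OF assms] eventually_at_right_less[of 0]
  by eventually_elim (simp add: pos_divide_less_eq)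

locale nonneg_delay_solution =
  fixes h :: real and g psi :: "real \<Rightarrow> real"
  assumes h_pos: "h > 0"
    and g_nonneg: "\<And>x. x \<ge> 0 \<Longrightarrow> g x \<ge> 0"
    and psi_nonneg: "\<And>t. psi t \<ge> 0"
    and psi_deriv: "\<And>t. (psi has_real_derivative (- psi t + g (psi (t - h)))) (at t)"
begin

lemma continuous_on_psi: "continuous_on S psi"
  using psi_deriv by (blast intro: continuous_at_imp_continuous_on DERIV_isCont)

lemma exp_mult_psi_deriv:
  "((\<lambda>t. exp t * psi t) has_real_derivative exp t * g (psi (t - h))) (at t)"
  using DERIV_mult[OF DERIV_exp psi_deriv] by (simp add: algebra_simps)

lemma exp_mult_psi_mono:
  assumes "s \<le> t"
  shows "exp s * psi s \<le> exp t * psi t"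
proof (rule DERIV_nonneg_imp_nondecreasing[OF assms])
  fix u
  have "exp u * g (psi (u - h)) \<ge> 0" using g_nonneg[OF psi_nonneg] by simp
  with exp_mult_psi_deriv
  show "\<exists>y. ((\<lambda>t. exp t * psi t) has_real_derivative y) (at u) \<and> 0 \<le> y" by blast
qed

lemma psi_le_exp_mult:
  assumes "s \<le> t"
  shows "psi s \<le> exp (t - s) * psi t"
  using exp_mult_psi_mono[OF assms] by (simp add: exp_diff field_simps)

lemma exp_mult_psi_le:
  assumes "s \<le> t"
  shows "exp (s - t) * psi s \<le> psi t"
  using exp_mult_psi_mono[OF assms] by (simp add: exp_diff field_simps)

lemma psi_zero_extends_by_delay:
  assumes "g 0 = 0" and zero: "\<And>u. u \<le> b \<Longrightarrow> psi u = 0" and "t \<le> b + h"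
  shows "psi t = 0"
proof (cases "t \<le> b")
  case False
  have "exp t * psi t = exp b * psi b"
  proof (rule DERIV_isconst_end[of b t])
    show "b < t" using False by simp
    show "continuous_on {b..t} (\<lambda>t. exp t * psi t)"
      by (intro continuous_intros continuous_on_psi)
    fix u assume "b < u" "u < t"
    then have "psi (u - h) = 0" using zero \<open>t \<le> b + h\<close> by simp
    then show "((\<lambda>t. exp t * psi t) has_real_derivative 0) (at u)"
      using exp_mult_psi_deriv[of u] \<open>g 0 = 0\<close> by simp
  qed
  then show ?thesis using zero[of b] by simp
qed (use zero in simp)

lemma psi_eq_0_if_vanishes:
  assumes "g 0 = 0" and "psi a = 0"
  shows "psi t = 0"
proof -
  have "psi u = 0" if "u \<le> a + real n * h" for n u
    using that
  proof (induction n arbitrary: u)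
    case 0
    then show ?case
      using psi_le_exp_mult[of u a] \<open>psi a = 0\<close> psi_nonneg[of u] by simp
  next
    case (Suc n)
    then show ?case
      using psi_zero_extends_by_delay[OF \<open>g 0 = 0\<close>, of "a + real n * h"] by (simp add: algebra_simps)
  qed
  moreover obtain n :: nat where "(t - a) / h \<le> real n"
    using real_arch_simple by blast
  then have "t \<le> a + real n * h" using h_pos by (simp add: field_simps)
  ultimately show ?thesis by blast
qed

lemma psi_pos:
  assumes "g 0 = 0" and "psi \<noteq> (\<lambda>_. 0)"
  shows "psi t > 0"
proof -
  obtain a where "psi a \<noteq> 0" using assms(2) by blast
  then have "psi t \<noteq> 0" using psi_eq_0_if_vanishes[OF \<open>g 0 = 0\<close>, of t] by blast
  then show ?thesis using psi_nonneg[of t] by simp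
qed

lemma psi_grows_at_least_exp:
  fixes lambda p \<tau> s :: real
  assumes "lambda \<ge> 0" and root: "p * exp (- lambda * h) = 1 + lambda"
    and pos: "\<And>t. psi t > 0"
    and g_ge: "\<And>t. t \<le> \<tau> \<Longrightarrow> p * psi t \<le> g (psi t)"
    and "s \<le> \<tau>"
  shows "psi s * exp (lambda * (\<tau> - s)) \<le> 2 * exp ((1 + lambda) * h) * psi \<tau>"
proof -
  have "p * exp (- lambda * h) > 0" using root \<open>lambda \<ge> 0\<close> by simp
  then have "p > 0" by (simp add: zero_less_mult_iff)
  define c where "c = psi s / (2 * exp ((1 + lambda) * h))"
  define w where "w = (\<lambda>t. c * exp (lambda * (t - s)))"
  have "w \<tau> < psi \<tau>"
  proof (rule delay_comparison[where x = w and y = psi and X = "\<lambda>t. p * w (t - h)"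
        and Y = "\<lambda>t. g (psi (t - h))" and a = "s + h" and b = \<tau>])
    show "(w has_real_derivative (- w t + p * w (t - h))) (at t)" for t
      unfolding w_def using root by (rule exp_solves_linear_delay)
    show "w t < psi t" if t: "t \<in> {s + h - h..s + h}" for t
    proof -
      have "lambda * (t - s) \<le> lambda * h" using t \<open>lambda \<ge> 0\<close> by (intro mult_left_mono) auto
      moreover have "c > 0" using pos[of s] by (simp add: c_def)
      ultimately have "w t \<le> c * exp (lambda * h)" by (simp add: w_def)
      also have "\<dots> = exp (- h) * psi s / 2"
        by (simp add: c_def distrib_right exp_add exp_minus field_simps)
      also have "\<dots> < exp (- h) * psi s" using pos[of s] by simp
      also have "\<dots> \<le> exp (s - t) * psi s" using t pos[of s] by (simp add: mult_right_mono)
      also have "\<dots> \<le> psi t" using t by (simp add: exp_mult_psi_le)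
      finally show ?thesis .
    qed
    show "p * w (t - h) < g (psi (t - h))" if "t \<in> {s + h<..\<tau>}" "w (t - h) < psi (t - h)" for t
    proof -
      have "p * w (t - h) < p * psi (t - h)" using that(2) \<open>p > 0\<close> by simp
      also have "\<dots> \<le> g (psi (t - h))" using that(1) h_pos by (intro g_ge) auto
      finally show ?thesis .
    qed
    show "\<tau> \<in> {s + h - h..\<tau>}" using \<open>s \<le> \<tau>\<close> by simp
  qed (use h_pos psi_deriv in simp_all)
  then show ?thesis by (simp add: w_def c_def field_simps)
qed

lemma psi_grows_at_most_exp:
  fixes lambda p \<tau> s :: real
  assumes "lambda \<ge> 0" and root: "p * exp (- lambda * h) = 1 + lambda"
    and pos: "\<And>t. psi t > 0"
    and g_le: "\<And>t. t \<le> \<tau> \<Longrightarrow> g (psi t) \<le> p * psi t"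
    and "s \<le> \<tau>"
  shows "psi \<tau> \<le> 2 * exp ((1 + lambda) * h) * psi s * exp (lambda * (\<tau> - s))"
proof -
  have "p * exp (- lambda * h) > 0" using root \<open>lambda \<ge> 0\<close> by simp
  then have "p > 0" by (simp add: zero_less_mult_iff)
  define c where "c = 2 * exp ((1 + lambda) * h) * psi s"
  define w where "w = (\<lambda>t. c * exp (lambda * (t - s)))"
  have "psi \<tau> < w \<tau>"
  proof (rule delay_comparison[where x = psi and y = w and X = "\<lambda>t. g (psi (t - h))"
        and Y = "\<lambda>t. p * w (t - h)" and a = s and b = \<tau>])
    show "(w has_real_derivative (- w t + p * w (t - h))) (at t)" for t
      unfolding w_def using root by (rule exp_solves_linear_delay)
    show "psi t < w t" if t: "t \<in> {s - h..s}" for t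
    proof -
      have "psi t \<le> exp (s - t) * psi s" using t by (simp add: psi_le_exp_mult)
      also have "\<dots> \<le> exp h * psi s" using t pos[of s] by (simp add: mult_right_mono)
      also have "\<dots> < 2 * exp h * psi s" using pos[of s] by simp
      also have "\<dots> = c * exp (lambda * (- h))"
        by (simp add: c_def distrib_right exp_add exp_minus field_simps)
      also have "\<dots> \<le> w t"
      proof -
        have "lambda * (- h) \<le> lambda * (t - s)" using t \<open>lambda \<ge> 0\<close> by (intro mult_left_mono) auto
        then show ?thesis using pos[of s] by (simp add: w_def c_def)
      qed
      finally show ?thesis .
    qed
    show "g (psi (t - h)) < p * w (t - h)" if "t \<in> {s<..\<tau>}" "psi (t - h) < w (t - h)" for t
    proof -
      have "g (psi (t - h)) \<le> p * psi (t - h)" using that(1) h_pos by (intro g_le) auto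
      also have "\<dots> < p * w (t - h)" using that(2) \<open>p > 0\<close> by simp
      finally show ?thesis .
    qed
    show "\<tau> \<in> {s - h..\<tau>}" using \<open>s \<le> \<tau>\<close> h_pos by simp
  qed (use h_pos psi_deriv in simp_all)
  then show ?thesis by (simp add: w_def c_def)
qed

lemma psi_exp_upper_bound:
  fixes lambda p \<tau> :: real
  assumes "lambda \<ge> 0" and "p * exp (- lambda * h) = 1 + lambda"
    and "\<And>t. psi t > 0"
    and "\<And>t. t \<le> \<tau> \<Longrightarrow> p * psi t \<le> g (psi t)"
  shows "\<exists>C>0. \<forall>s\<le>\<tau>. psi s \<le> C * exp (lambda * s)"
proof (intro exI conjI allI impI)
  define C where "C = 2 * exp ((1 + lambda) * h) * psi \<tau> / exp (lambda * \<tau>)"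
  show "C > 0" using assms(3) by (simp add: C_def)
  fix s assume "s \<le> \<tau>"
  with assms have "psi s * exp (lambda * (\<tau> - s)) \<le> 2 * exp ((1 + lambda) * h) * psi \<tau>"
    by (rule psi_grows_at_least_exp)
  then show "psi s \<le> C * exp (lambda * s)"
    by (simp add: C_def right_diff_distrib exp_diff field_simps)
qed

lemma psi_exp_lower_bound:
  fixes lambda p \<tau> :: real
  assumes "lambda \<ge> 0" and "p * exp (- lambda * h) = 1 + lambda"
    and "\<And>t. psi t > 0"
    and "\<And>t. t \<le> \<tau> \<Longrightarrow> g (psi t) \<le> p * psi t"
  shows "\<exists>C>0. \<forall>s\<le>\<tau>. C * exp (lambda * s) \<le> psi s"
proof (intro exI conjI allI impI)
  define C where "C = psi \<tau> / (2 * exp ((1 + lambda) * h) * exp (lambda * \<tau>))"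
  show "C > 0" using assms(3) by (simp add: C_def)
  fix s assume "s \<le> \<tau>"
  with assms have "psi \<tau> \<le> 2 * exp ((1 + lambda) * h) * psi s * exp (lambda * (\<tau> - s))"
    by (rule psi_grows_at_most_exp)
  then show "C * exp (lambda * s) \<le> psi s"
    by (simp add: C_def right_diff_distrib exp_diff field_simps)
qed

end

theorem lemma6:
  fixes h K p1 p2 lambda1 lambda2 :: real
    and g psi :: "real \<Rightarrow> real"
  assumes h_pos: "h > 0" and K_pos: "K > 0"
    and g_cont: "continuous_on {0..} g"
    and g_nonneg: "\<forall>x\<ge>0. g x \<ge> 0"
    and g0: "g 0 = 0" and gK: "g K = K"
    and liminf_gt1: "Liminf (at_right 0) (\<lambda>x. ereal (g x / x)) > 1"
    and p1_gt1: "1 < p1"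
    and p1_lt: "ereal p1 < Liminf (at_right 0) (\<lambda>x. ereal (g x / x))"
    and liminf_le_limsup: "Liminf (at_right 0) (\<lambda>x. ereal (g x / x))
                             \<le> Limsup (at_right 0) (\<lambda>x. ereal (g x / x))"
    and p2_gt: "Limsup (at_right 0) (\<lambda>x. ereal (g x / x)) < ereal p2"
    and lambda1_pos: "lambda1 > 0" and lambda1_root: "lambda1 = -1 + p1 * exp (- lambda1 * h)"
    and lambda2_pos: "lambda2 > 0" and lambda2_root: "lambda2 = -1 + p2 * exp (- lambda2 * h)"
    and psi_nonneg: "\<forall>t. psi t \<ge> 0"
    and psi_sol: "\<forall>t. (psi has_real_derivative (- psi t + g (psi (t - h)))) (at t)"
    and psi_minus_inf: "(psi \<longlongrightarrow> 0) at_bot"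
    and psi_plus_inf: "(psi \<longlongrightarrow> K) at_top"
  shows "\<exists>\<tau><0. \<exists>C1>0. \<exists>C2>0. \<forall>t\<le>\<tau>.
           C1 * exp (lambda2 * t) \<le> psi t \<and> psi t \<le> C2 * exp (lambda1 * t)"
proof -
  interpret nonneg_delay_solution h g psi
    by unfold_locales (use h_pos g_nonneg psi_nonneg psi_sol in simp_all)
  have "psi \<noteq> (\<lambda>_. 0)"
  proof
    assume "psi = (\<lambda>_. 0)"
    with psi_plus_inf have "((\<lambda>_::real. 0) \<longlongrightarrow> K) at_top" by simp
    with K_pos show False by (simp add: tendsto_const_iff)
  qed
  with g0 have pos: "\<And>t. psi t > 0" by (rule psi_pos)
  have "\<forall>\<^sub>F x in at_right 0. p1 * x \<le> g x \<and> g x \<le> p2 * x"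
    using eventually_mult_le_of_less_Liminf_ratio[OF p1_lt]
      eventually_le_mult_of_Limsup_ratio_less[OF p2_gt]
    by (rule eventually_conj)
  moreover have "filterlim psi (at_right 0) at_bot"
    by (rule tendsto_imp_filterlim_at_right[OF psi_minus_inf]) (simp add: pos)
  ultimately have "\<forall>\<^sub>F t in at_bot. p1 * psi t \<le> g (psi t) \<and> g (psi t) \<le> p2 * psi t"
    by (rule eventually_compose_filterlim)
  then obtain T where T: "\<And>t. t \<le> T \<Longrightarrow> p1 * psi t \<le> g (psi t) \<and> g (psi t) \<le> p2 * psi t"
    unfolding eventually_at_bot_linorder by blast
  define \<tau> where "\<tau> = min T (-1)"
  have "\<exists>C2>0. \<forall>s\<le>\<tau>. psi s \<le> C2 * exp (lambda1 * s)"
    by (rule psi_exp_upper_bound) (use lambda1_pos lambda1_root pos T in \<open>auto simp: \<tau>_def\<close>)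
  moreover have "\<exists>C1>0. \<forall>s\<le>\<tau>. C1 * exp (lambda2 * s) \<le> psi s"
    by (rule psi_exp_lower_bound) (use lambda2_pos lambda2_root pos T in \<open>auto simp: \<tau>_def\<close>)
  moreover have "\<tau> < 0" by (simp add: \<tau>_def)
  ultimately show ?thesis by blast
qed

end
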